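(* Let $A$ be a non-negative $d\times d$ matrix and let $\Pi$ be a permutation matrix such that $\widetilde A=\Pi A\Pi^T$ is block upper triangular, with square diagonal blocks $\widetilde A_{1,1},\dots,\widetilde A_{m,m}$, blocks $\widetilde A_{i,j}$ for $i<j$ above the diagonal, and zero blocks below the diagonal. For each $i=1,\dots,m$, let $\widetilde X^{(i)}$ be a closest stable non-negative matrix to $\widetilde A_{i,i}$. In particular, $\widetilde X^{(i)}=\widetilde A_{i,i}$ if $\rho(\widetilde A_{i,i})\le1$. Let $\widetilde X$ be the block upper triangular matrix with diagonal blocks $\widetilde X^{(i)}$, blocks $\widetilde A_{i,j}$ above the diagonal ($i<j$), and zero blocks below the diagonal. Then $X=\Pi^T\widetilde X\Pi$ is a closest stable non-negative matrix to $A$.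
   Context: $\rho(\cdot)$ denotes spectral radius and $\|\cdot\|$ the Frobenius norm $\|X\|=\sqrt{\sum_{i,j}x_{ij}^2}$. A square matrix $X$ is called stable if $\rho(X)\le 1$. A closest stable non-negative matrix to a square matrix $B$ is a global minimizer of $\|X-B\|$ over all entrywise non-negative $X$ of the same size with $\rho(X)\le 1$. *)

theory Defs
  imports "Jordan_Normal_Form.Spectral_Radius"
begin

definition nonneg_mat :: "real mat \<Rightarrow> bool" where
  "nonneg_mat X \<longleftrightarrow> (\<forall>i<dim_row X. \<forall>j<dim_col X. X $$ (i,j) \<ge> 0)"

definition rho :: "real mat \<Rightarrow> real" where
  "rho X = spectral_radius (map_mat complex_of_real X)"

definition frob_norm :: "real mat \<Rightarrow> real" where
  "frob_norm X = sqrt (\<Sum>i<dim_row X. \<Sum>j<dim_col X. (X $$ (i,j))\<^sup>2)"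

definition stable :: "real mat \<Rightarrow> bool" where
  "stable X \<longleftrightarrow> rho X \<le> 1"

definition closest_stable_nonneg :: "real mat \<Rightarrow> real mat \<Rightarrow> bool" where
  "closest_stable_nonneg X B \<longleftrightarrow>
     X \<in> carrier_mat (dim_row B) (dim_row B) \<and> nonneg_mat X \<and> stable X \<and>
     (\<forall>Y \<in> carrier_mat (dim_row B) (dim_row B). nonneg_mat Y \<and> stable Y \<longrightarrow>
        frob_norm (X - B) \<le> frob_norm (Y - B))"

definition permutation_mat :: "nat \<Rightarrow> real mat \<Rightarrow> bool" where
  "permutation_mat d P \<longleftrightarrow> P \<in> carrier_mat d d \<and>
     (\<forall>i<d. \<forall>j<d. P $$ (i,j) = 0 \<or> P $$ (i,j) = 1) \<and>
     (\<forall>i<d. \<exists>!j. j < d \<and> P $$ (i,j) = 1) \<and>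
     (\<forall>j<d. \<exists>!i. i < d \<and> P $$ (i,j) = 1)"

text \<open>Block (k,l) of M for the block partition with offsets n 0 < n 1 < ... < n m:
  rows n k ..< n (k+1), columns n l ..< n (l+1).\<close>
definition block :: "(nat \<Rightarrow> nat) \<Rightarrow> real mat \<Rightarrow> nat \<Rightarrow> nat \<Rightarrow> real mat" where
  "block n M k l = mat (n (Suc k) - n k) (n (Suc l) - n l) (\<lambda>(i,j). M $$ (n k + i, n l + j))"

end

theory Submission
  imports Defs "HOL-Real_Asymp.Real_Asymp"
begin

text \<open>Conjugation by a permutation matrix preserves nonnegativity, the spectral radius and
  Frobenius distances, so it suffices to show that the block upper triangular \<open>X\<close> is a closest
  stable nonnegative matrix to \<open>B = P A P\<^sup>T\<close>. Every eigenvalue of \<open>X\<close> is an eigenvalue of a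
  diagonal block, hence \<open>X\<close> is stable. Conversely, the diagonal blocks of a nonnegative stable
  \<open>Y\<close> are stable: if a block had an eigenvalue \<open>e\<close> with \<open>|e| > 1\<close> and eigenvector \<open>w\<close>, then
  \<open>Y\<close> would expand the nonnegative vector \<open>|w|\<close> by the factor \<open>|e|\<close>, forcing exponential
  growth of \<open>Y\<^sup>k\<close>, while \<open>\<rho>(Y) \<le> 1\<close> bounds its entries polynomially. As \<open>X\<close> agrees with \<open>B\<close>
  off the diagonal blocks,
  \<open>\<parallel>X - B\<parallel>\<^sup>2 = \<Sum>\<^sub>i \<parallel>X\<^sub>i\<^sub>i - B\<^sub>i\<^sub>i\<parallel>\<^sup>2 \<le> \<Sum>\<^sub>i \<parallel>Y\<^sub>i\<^sub>i - B\<^sub>i\<^sub>i\<parallel>\<^sup>2 \<le> \<parallel>Y - B\<parallel>\<^sup>2\<close>.\<close>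

section \<open>Nonnegative matrices and the spectral radius\<close>

lemma index_mult_mat_vec_sum:
  fixes M :: "'a::comm_ring_1 mat"
  assumes "M \<in> carrier_mat n d" "v \<in> carrier_vec d" "i < n"
  shows "(M *\<^sub>v v) $ i = (\<Sum>j<d. M $$ (i,j) * v $ j)"
  using assms by (auto simp: scalar_prod_def atLeast0LessThan)

lemma nonneg_matD:
  "nonneg_mat X \<Longrightarrow> X \<in> carrier_mat r c \<Longrightarrow> i < r \<Longrightarrow> j < c \<Longrightarrow> 0 \<le> X $$ (i,j)"
  unfolding nonneg_mat_def by auto

lemma nonneg_mat_mult:
  assumes "nonneg_mat A" "nonneg_mat B" "dim_col A = dim_row B"
  shows "nonneg_mat (A * B)"
  using assms unfolding nonneg_mat_def by (auto simp: scalar_prod_def intro!: sum_nonneg)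

lemma nonneg_mat_pow:
  assumes "A \<in> carrier_mat n n" "nonneg_mat A"
  shows "nonneg_mat (A ^\<^sub>m k)"
proof (induction k)
  case 0
  then show ?case using assms(1) by (auto simp: nonneg_mat_def)
next
  case (Suc k)
  then show ?case using assms by (simp add: nonneg_mat_mult)
qed

lemma stable_iff_eigenvalues:
  assumes X: "X \<in> carrier_mat n n" and n: "0 < n"
  shows "stable X \<longleftrightarrow> (\<forall>l. eigenvalue (map_mat complex_of_real X) l \<longrightarrow> cmod l \<le> 1)"
proof -
  have Xc: "map_mat complex_of_real X \<in> carrier_mat n n" using X by simp
  show ?thesis
    using spectral_radius_mem_max[OF Xc n]
    unfolding stable_def rho_def spectrum_def by force
qed

lemma stable_pow_entry_bound:
  assumes Y: "Y \<in> carrier_mat d d" and "stable Y"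
  obtains c1 c2 where
    "\<And>k i j. i < d \<Longrightarrow> j < d \<Longrightarrow> \<bar>(Y ^\<^sub>m k) $$ (i,j)\<bar> \<le> c1 + c2 * real k ^ (d - 1)"
proof -
  let ?Yc = "map_mat complex_of_real Y"
  have "?Yc \<in> carrier_mat d d" "spectral_radius ?Yc \<le> 1"
    using Y \<open>stable Y\<close> unfolding stable_def rho_def by auto
  from spectral_radius_jnf_norm_bound_le_1_upper_triangular[OF this]
  obtain c1 c2 where bound: "\<And>k. norm_bound (?Yc ^\<^sub>m k) (c1 + c2 * real k ^ (d - 1))" by auto
  have "?Yc ^\<^sub>m k = map_mat complex_of_real (Y ^\<^sub>m k)" for k
    using of_real_hom.mat_hom_pow[OF Y] by metis
  with bound Y have "\<bar>(Y ^\<^sub>m k) $$ (i,j)\<bar> \<le> c1 + c2 * real k ^ (d - 1)" if "i < d" "j < d" for k i j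
    using that unfolding norm_bound_def
    by (metis (no_types) carrier_matD(1,2) index_map_mat norm_of_real pow_carrier_mat)
  then show ?thesis using that by blast
qed

lemma nonneg_expanding_vector_pow:
  assumes Y: "Y \<in> carrier_mat d d" "nonneg_mat Y" and z: "z \<in> carrier_vec d"
    and r: "0 \<le> r" and expand: "\<forall>i<d. r * z $ i \<le> (Y *\<^sub>v z) $ i"
  shows "\<forall>i<d. r ^ k * z $ i \<le> (Y ^\<^sub>m k *\<^sub>v z) $ i"
proof (induction k)
  case 0
  then show ?case using Y z by auto
next
  case (Suc k)
  have Yk: "Y ^\<^sub>m k \<in> carrier_mat d d" using Y by simp
  have Yk_nonneg: "0 \<le> (Y ^\<^sub>m k) $$ (i,j)" if "i < d" "j < d" for i j
    using nonneg_matD[OF nonneg_mat_pow[OF Y] Yk that] .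
  show ?case
  proof (intro allI impI)
    fix i assume i: "i < d"
    have "r ^ Suc k * z $ i \<le> r * (Y ^\<^sub>m k *\<^sub>v z) $ i"
      using Suc i r by (simp add: mult_left_mono mult.assoc)
    also have "\<dots> = (\<Sum>j<d. (Y ^\<^sub>m k) $$ (i,j) * (r * z $ j))"
      by (simp add: index_mult_mat_vec_sum[OF Yk z i] sum_distrib_left algebra_simps)
    also have "\<dots> \<le> (\<Sum>j<d. (Y ^\<^sub>m k) $$ (i,j) * (Y *\<^sub>v z) $ j)"
      using expand Yk_nonneg i by (intro sum_mono mult_left_mono) auto
    also have "\<dots> = (Y ^\<^sub>m k *\<^sub>v (Y *\<^sub>v z)) $ i"
      using Y z by (simp add: index_mult_mat_vec_sum[OF Yk _ i])
    also have "\<dots> = (Y ^\<^sub>m Suc k *\<^sub>v z) $ i"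
      using assoc_mult_mat_vec[OF Yk Y(1) z] by simp
    finally show "r ^ Suc k * z $ i \<le> (Y ^\<^sub>m Suc k *\<^sub>v z) $ i" .
  qed
qed

lemma nonneg_expanding_vector_not_stable:
  assumes Y: "Y \<in> carrier_mat d d" "nonneg_mat Y"
    and z: "z \<in> carrier_vec d" "\<forall>i<d. 0 \<le> z $ i" and a: "a < d" "0 < z $ a"
    and r: "1 < r" and expand: "\<forall>i<d. r * z $ i \<le> (Y *\<^sub>v z) $ i"
  shows "\<not> stable Y"
proof
  assume "stable Y"
  then obtain c1 c2 where bound:
    "\<And>k i j. i < d \<Longrightarrow> j < d \<Longrightarrow> \<bar>(Y ^\<^sub>m k) $$ (i,j)\<bar> \<le> c1 + c2 * real k ^ (d - 1)"
    using stable_pow_entry_bound[OF Y(1)] by blast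
  define S where "S = (\<Sum>j<d. z $ j)"
  have "z $ a \<le> S" unfolding S_def using a z by (intro member_le_sum) auto
  then have S: "0 < S" using a by auto
  have growth: "r ^ k * z $ a \<le> (c1 + c2 * real k ^ (d - 1)) * S" for k
  proof -
    have Yk: "Y ^\<^sub>m k \<in> carrier_mat d d" using Y by simp
    have "r ^ k * z $ a \<le> (Y ^\<^sub>m k *\<^sub>v z) $ a"
      using nonneg_expanding_vector_pow[OF Y z(1) _ expand, of k] r a by auto
    also have "\<dots> = (\<Sum>j<d. (Y ^\<^sub>m k) $$ (a,j) * z $ j)"
      by (rule index_mult_mat_vec_sum[OF Yk z(1) a(1)])
    also have "\<dots> \<le> (\<Sum>j<d. (c1 + c2 * real k ^ (d - 1)) * z $ j)"
      using bound a z by (intro sum_mono mult_right_mono) (auto simp: abs_le_iff)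
    finally show ?thesis unfolding S_def by (simp add: sum_distrib_left)
  qed
  \<comment> \<open>The entries of \<open>Y ^ k\<close> grow polynomially in \<open>k\<close>, but \<open>Y ^ k z\<close> grows like \<open>r ^ k\<close>.\<close>
  have "(\<lambda>k. (c1 + c2 * real k ^ (d - 1)) / r ^ k) \<longlonglongrightarrow> 0"
    using r by real_asymp
  from order_tendstoD(2)[OF this, of "z $ a / S"] S a obtain k
    where "(c1 + c2 * real k ^ (d - 1)) / r ^ k < z $ a / S"
    by (auto simp: eventually_sequentially)
  with growth[of k] S r show False by (simp add: field_simps)
qed

definition block_partition :: "(nat \<Rightarrow> nat) \<Rightarrow> nat \<Rightarrow> nat \<Rightarrow> bool" where
  "block_partition n m d \<longleftrightarrow> n 0 = 0 \<and> n m = d \<and> (\<forall>k<m. n k < n (Suc k))"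

lemma block_partition_mono:
  assumes "block_partition n m d" "k \<le> l" "l \<le> m"
  shows "n k \<le> n l"
  using assms(2,3)
proof (induction l)
  case (Suc l)
  show ?case
  proof (cases "k = Suc l")
    case False
    then have "n k \<le> n l" using Suc by simp
    also have "n l \<le> n (Suc l)"
      using assms(1) Suc.prems(2) unfolding block_partition_def by (simp add: Suc_le_eq less_imp_le)
    finally show ?thesis .
  qed simp
qed simp

lemma block_partition_le:
  assumes "block_partition n m d" "k < m"
  shows "n k < n (Suc k)" "n (Suc k) \<le> d"
  using assms block_partition_mono[OF assms(1), of "Suc k" m] unfolding block_partition_def by auto

lemma sum_lessThan_blocks:
  fixes n :: "nat \<Rightarrow> nat"
  assumes "n 0 = 0" "\<forall>k<m. n k \<le> n (Suc k)"
  shows "(\<Sum>i<n m. g i) = (\<Sum>k<m. \<Sum>i=n k..<n (Suc k). g i)"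
  using assms(2)
proof (induction m)
  case (Suc m)
  then have "(\<Sum>i<n (Suc m). g i) = (\<Sum>i<n m. g i) + (\<Sum>i=n m..<n (Suc m). g i)"
    using sum.atLeastLessThan_concat[of 0 "n m" "n (Suc m)" g] by (simp add: atLeast0LessThan)
  with Suc show ?case by simp
qed (use assms(1) in simp)

lemma lessThan_eq_UN_blocks:
  fixes n :: "nat \<Rightarrow> nat"
  assumes "n 0 = 0" "\<forall>k<m. n k \<le> n (Suc k)"
  shows "{..<n m} = (\<Union>k<m. {n k..<n (Suc k)})"
  using assms(2)
proof (induction m)
  case (Suc m)
  have "n m \<le> n (Suc m)" using Suc.prems by simp
  then have "{..<n (Suc m)} = {..<n m} \<union> {n m..<n (Suc m)}" by auto
  then show ?case using Suc by (simp add: lessThan_Suc Un_commute)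
qed (use assms(1) in simp)

lemma block_partition_cover:
  assumes "block_partition n m d" "j < d"
  obtains k where "k < m" "n k \<le> j" "j < n (Suc k)"
proof -
  from assms have "n 0 = 0" "\<forall>k<m. n k \<le> n (Suc k)" "j \<in> {..<n m}"
    unfolding block_partition_def by auto
  from this(3)[unfolded lessThan_eq_UN_blocks[OF this(1,2)]] show ?thesis
    using that by auto
qed

lemma block_carrier: "block n M k l \<in> carrier_mat (n (Suc k) - n k) (n (Suc l) - n l)"
  by (simp add: block_def)

lemma block_entry:
  assumes "n k \<le> i" "i < n (Suc k)" "n l \<le> j" "j < n (Suc l)"
  shows "block n M k l $$ (i - n k, j - n l) = M $$ (i,j)"
  using assms by (simp add: block_def)

lemma block_eq_entry:
  assumes "block n X k l = block n Y k l" "n k \<le> i" "i < n (Suc k)" "n l \<le> j" "j < n (Suc l)"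
  shows "X $$ (i,j) = Y $$ (i,j)"
  using block_entry[OF assms(2-5), of X] block_entry[OF assms(2-5), of Y] assms(1) by simp

lemma block_minus:
  assumes "X \<in> carrier_mat d d" "Y \<in> carrier_mat d d" "n (Suc k) \<le> d" "n (Suc l) \<le> d"
  shows "block n (X - Y) k l = block n X k l - block n Y k l"
  by (rule eq_matI) (use assms in \<open>auto simp: block_def\<close>)

lemma block_lower_zero_entry:
  assumes part: "block_partition n m d"
    and low: "\<forall>k<m. \<forall>l<k. block n X k l = 0\<^sub>m (n (Suc k) - n k) (n (Suc l) - n l)"
    and i: "k < m" "n k \<le> i" "i < n (Suc k)" and j: "j < n k"
  shows "X $$ (i,j) = 0"
proof -
  have "j < d" using j block_partition_le[OF part i(1)] by linarith
  then obtain l where l: "l < m" "n l \<le> j" "j < n (Suc l)" using block_partition_cover[OF part] by blast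
  have "l < k"
  proof (rule ccontr)
    assume "\<not> l < k"
    then have "n k \<le> n l" using block_partition_mono[OF part, of k l] l(1) by simp
    with l(2) j show False by simp
  qed
  then have "block n X k l $$ (i - n k, j - n l) = 0"
    using low i l by auto
  then show ?thesis
    using block_entry[OF i(2,3) l(2,3), of X] by simp
qed

lemma sum_lessThan_restrict_ivl:
  fixes p q d :: nat
  assumes "p \<le> q" "q \<le> d" "\<forall>b<d. b < p \<or> q \<le> b \<longrightarrow> f b = 0"
  shows "(\<Sum>b<d. f b) = (\<Sum>c<q - p. f (p + c))"
proof -
  have "(\<Sum>b<d. f b) = (\<Sum>b=p..<q. f b)"
  proof (rule sum.mono_neutral_right)
    show "{p..<q} \<subseteq> {..<d}" using assms(2) by auto
    show "\<forall>b\<in>{..<d} - {p..<q}. f b = 0" using assms(3) by auto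
  qed simp
  also have "\<dots> = (\<Sum>c<q - p. f (p + c))"
    by (simp add: sum.atLeastLessThan_shift_0 atLeast0LessThan comp_def)
  finally show ?thesis .
qed

section \<open>Spectra of diagonal blocks\<close>

definition block_vec :: "(nat \<Rightarrow> nat) \<Rightarrow> 'a vec \<Rightarrow> nat \<Rightarrow> 'a vec" where
  "block_vec n v k = vec (n (Suc k) - n k) (\<lambda>a. v $ (n k + a))"

lemma mult_block_vec_upper_triangular:
  fixes X :: "real mat" and v :: "complex vec"
  assumes X: "X \<in> carrier_mat d d" and part: "block_partition n m d"
    and low: "\<forall>k<m. \<forall>l<k. block n X k l = 0\<^sub>m (n (Suc k) - n k) (n (Suc l) - n l)"
    and k: "k < m" and v: "v \<in> carrier_vec d" and tail: "\<forall>b<d. n (Suc k) \<le> b \<longrightarrow> v $ b = 0"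
  shows "map_mat complex_of_real (block n X k k) *\<^sub>v block_vec n v k =
    block_vec n (map_mat complex_of_real X *\<^sub>v v) k"
proof (rule eq_vecI)
  define s where "s = n (Suc k) - n k"
  let ?B = "map_mat complex_of_real (block n X k k)"
  have nk: "n k < n (Suc k)" "n (Suc k) \<le> d" using block_partition_le[OF part k] by auto
  have B: "?B \<in> carrier_mat s s" and u: "block_vec n v k \<in> carrier_vec s"
    unfolding s_def by (simp_all add: block_def block_vec_def)
  fix a assume "a < dim_vec (block_vec n (map_mat complex_of_real X *\<^sub>v v) k)"
  then have a: "a < s" "n k + a < d" using nk unfolding block_vec_def s_def by auto
  have "(?B *\<^sub>v block_vec n v k) $ a = (\<Sum>c<s. ?B $$ (a,c) * block_vec n v k $ c)"
    by (rule index_mult_mat_vec_sum[OF B u a(1)])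
  also have "\<dots> = (\<Sum>c<s. complex_of_real (X $$ (n k + a, n k + c)) * v $ (n k + c))"
    using a unfolding block_vec_def s_def by (intro sum.cong) (auto simp: block_def)
  also have "\<dots> = (\<Sum>b<d. complex_of_real (X $$ (n k + a, b)) * v $ b)"
    unfolding s_def
  proof (rule sum_lessThan_restrict_ivl[symmetric])
    show "\<forall>b<d. b < n k \<or> n (Suc k) \<le> b \<longrightarrow> complex_of_real (X $$ (n k + a, b)) * v $ b = 0"
      using block_lower_zero_entry[OF part low k] tail a unfolding s_def by auto
  qed (use nk in auto)
  also have "\<dots> = (map_mat complex_of_real X *\<^sub>v v) $ (n k + a)"
    using index_mult_mat_vec_sum[of "map_mat complex_of_real X" d d v "n k + a"] X v a by simp
  finally show "(?B *\<^sub>v block_vec n v k) $ a = block_vec n (map_mat complex_of_real X *\<^sub>v v) k $ a"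
    using a unfolding block_vec_def s_def by simp
qed (simp add: block_def block_vec_def)

lemma eigenvalue_block_upper_triangular:
  assumes X: "X \<in> carrier_mat d d" and part: "block_partition n m d"
    and low: "\<forall>k<m. \<forall>l<k. block n X k l = 0\<^sub>m (n (Suc k) - n k) (n (Suc l) - n l)"
    and ev: "eigenvalue (map_mat complex_of_real X) e"
  shows "\<exists>k<m. eigenvalue (map_mat complex_of_real (block n X k k)) e"
proof -
  obtain v where v: "v \<in> carrier_vec d" "v \<noteq> 0\<^sub>v d"
    and Xv: "map_mat complex_of_real X *\<^sub>v v = e \<cdot>\<^sub>v v"
    using ev X unfolding eigenvalue_def eigenvector_def by auto
  \<comment> \<open>Restricted to the block of its last nonzero coordinate, \<open>v\<close> is an eigenvector of that block.\<close>
  define i0 where "i0 = Max {b. b < d \<and> v $ b \<noteq> 0}"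
  have "{b. b < d \<and> v $ b \<noteq> 0} \<noteq> {}" using v by (auto simp: vec_eq_iff)
  then have i0: "i0 < d" "v $ i0 \<noteq> 0" and tail: "\<And>b. b < d \<Longrightarrow> i0 < b \<Longrightarrow> v $ b = 0"
    unfolding i0_def using Max_in[of "{b. b < d \<and> v $ b \<noteq> 0}"] Max_ge[of "{b. b < d \<and> v $ b \<noteq> 0}"]
    by (auto simp: not_less[symmetric])
  obtain k where k: "k < m" "n k \<le> i0" "i0 < n (Suc k)"
    using block_partition_cover[OF part i0(1)] by blast
  define s where "s = n (Suc k) - n k"
  let ?B = "map_mat complex_of_real (block n X k k)"
  let ?u = "block_vec n v k"
  have B: "?B \<in> carrier_mat s s" and u: "?u \<in> carrier_vec s"
    unfolding s_def by (simp_all add: block_def block_vec_def)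
  have idx: "i0 - n k < s" using k unfolding s_def by simp
  moreover have "?u $ (i0 - n k) = v $ i0" using k idx unfolding block_vec_def s_def by simp
  ultimately have u0: "?u \<noteq> 0\<^sub>v s" using i0(2) by auto
  have "?B *\<^sub>v ?u = block_vec n (e \<cdot>\<^sub>v v) k"
    using mult_block_vec_upper_triangular[OF X part low k(1) v(1)] tail k Xv by auto
  also have "\<dots> = e \<cdot>\<^sub>v ?u"
    using v(1) block_partition_le[OF part k(1)] by (intro eq_vecI) (auto simp: block_vec_def)
  finally have "eigenvector ?B ?u e" using B u u0 unfolding eigenvector_def by simp
  then show ?thesis using k(1) unfolding eigenvalue_def by blast
qed

lemma stable_block_upper_triangular:
  assumes X: "X \<in> carrier_mat d d" and part: "block_partition n m d" and m: "0 < m"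
    and low: "\<forall>k<m. \<forall>l<k. block n X k l = 0\<^sub>m (n (Suc k) - n k) (n (Suc l) - n l)"
    and diag: "\<forall>k<m. stable (block n X k k)"
  shows "stable X"
proof -
  have "0 < d" using block_partition_le[OF part m] by simp
  show ?thesis unfolding stable_iff_eigenvalues[OF X \<open>0 < d\<close>]
  proof (intro allI impI)
    fix e assume "eigenvalue (map_mat complex_of_real X) e"
    then obtain k where k: "k < m" "eigenvalue (map_mat complex_of_real (block n X k k)) e"
      using eigenvalue_block_upper_triangular[OF X part low] by blast
    have "0 < n (Suc k) - n k" using block_partition_le[OF part k(1)] by simp
    from stable_iff_eigenvalues[OF block_carrier this] diag k show "cmod e \<le> 1" by blast
  qed
qed

definition embed_block_vec :: "(nat \<Rightarrow> nat) \<Rightarrow> nat \<Rightarrow> 'a vec \<Rightarrow> nat \<Rightarrow> 'a::zero vec" where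
  "embed_block_vec n d u k = vec d (\<lambda>c. if n k \<le> c \<and> c < n (Suc k) then u $ (c - n k) else 0)"

lemma index_mult_embed_block_vec:
  fixes Y :: "'a::comm_ring_1 mat"
  assumes Y: "Y \<in> carrier_mat d d" and nk: "n k \<le> n (Suc k)" "n (Suc k) \<le> d" and c: "c < d"
  shows "(Y *\<^sub>v embed_block_vec n d u k) $ c = (\<Sum>j<n (Suc k) - n k. Y $$ (c, n k + j) * u $ j)"
proof -
  have "(Y *\<^sub>v embed_block_vec n d u k) $ c = (\<Sum>b<d. Y $$ (c, b) * embed_block_vec n d u k $ b)"
    by (rule index_mult_mat_vec_sum[OF Y _ c]) (simp add: embed_block_vec_def)
  also have "\<dots> = (\<Sum>j<n (Suc k) - n k. Y $$ (c, n k + j) * embed_block_vec n d u k $ (n k + j))"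
    by (intro sum_lessThan_restrict_ivl) (use nk in \<open>auto simp: embed_block_vec_def\<close>)
  also have "\<dots> = (\<Sum>j<n (Suc k) - n k. Y $$ (c, n k + j) * u $ j)"
    using nk by (intro sum.cong) (auto simp: embed_block_vec_def)
  finally show ?thesis .
qed

lemma diag_block_eigenvector_expansion:
  fixes Y :: "real mat"
  assumes Y: "Y \<in> carrier_mat d d" "nonneg_mat Y" and nk: "n k \<le> n (Suc k)" "n (Suc k) \<le> d"
    and w: "w \<in> carrier_vec (n (Suc k) - n k)"
    and Bw: "map_mat complex_of_real (block n Y k k) *\<^sub>v w = e \<cdot>\<^sub>v w" and c: "c < d"
  shows "cmod e * embed_block_vec n d (map_vec cmod w) k $ c \<le>
    (Y *\<^sub>v embed_block_vec n d (map_vec cmod w) k) $ c"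
proof -
  define s where "s = n (Suc k) - n k"
  let ?B = "map_mat complex_of_real (block n Y k k)"
  have B: "?B \<in> carrier_mat s s" unfolding s_def by (simp add: block_def)
  have Y_nonneg: "0 \<le> Y $$ (c, n k + j)" if "j < s" for j
    using nonneg_matD[OF Y(2,1) c] that nk unfolding s_def by simp
  have Yz: "(Y *\<^sub>v embed_block_vec n d (map_vec cmod w) k) $ c = (\<Sum>j<s. Y $$ (c, n k + j) * cmod (w $ j))"
    unfolding index_mult_embed_block_vec[OF Y(1) nk c] s_def
    using w by (intro sum.cong) auto
  show ?thesis
  proof (cases "n k \<le> c \<and> c < n (Suc k)")
    case False
    then show ?thesis using c Y_nonneg unfolding Yz by (auto simp: embed_block_vec_def intro!: sum_nonneg)
  next
    case True
    define a where "a = c - n k"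
    have a: "a < s" "c = n k + a" using True unfolding a_def s_def by auto
    have "cmod e * embed_block_vec n d (map_vec cmod w) k $ c = cmod ((?B *\<^sub>v w) $ a)"
      using True c a w unfolding Bw embed_block_vec_def a_def s_def by (simp add: norm_mult)
    also have "\<dots> = cmod (\<Sum>j<s. complex_of_real (Y $$ (c, n k + j)) * w $ j)"
      unfolding index_mult_mat_vec_sum[OF B w[folded s_def] a(1)]
      using a unfolding s_def by (auto simp: block_def intro!: sum.cong arg_cong[where f=cmod])
    also have "\<dots> \<le> (\<Sum>j<s. cmod (complex_of_real (Y $$ (c, n k + j)) * w $ j))"
      by (rule norm_sum)
    also have "\<dots> = (Y *\<^sub>v embed_block_vec n d (map_vec cmod w) k) $ c"
      unfolding Yz using Y_nonneg by (auto simp: norm_mult intro!: sum.cong)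
    finally show ?thesis .
  qed
qed

lemma stable_diag_block_of_nonneg:
  assumes Y: "Y \<in> carrier_mat d d" "nonneg_mat Y" "stable Y"
    and nk: "n k < n (Suc k)" "n (Suc k) \<le> d"
  shows "stable (block n Y k k)"
proof -
  define s where "s = n (Suc k) - n k"
  have B: "block n Y k k \<in> carrier_mat s s" unfolding s_def by (rule block_carrier)
  have "0 < s" using nk unfolding s_def by simp
  show ?thesis unfolding stable_iff_eigenvalues[OF B \<open>0 < s\<close>]
  proof (intro allI impI)
    fix e assume "eigenvalue (map_mat complex_of_real (block n Y k k)) e"
    then obtain w where w: "w \<in> carrier_vec s" "w \<noteq> 0\<^sub>v s"
      and Bw: "map_mat complex_of_real (block n Y k k) *\<^sub>v w = e \<cdot>\<^sub>v w"
      using B unfolding eigenvalue_def eigenvector_def by auto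
    obtain j0 where j0: "j0 < s" "w $ j0 \<noteq> 0" using w by (auto simp: vec_eq_iff)
    let ?z = "embed_block_vec n d (map_vec cmod w) k"
    have z: "?z \<in> carrier_vec d" "\<forall>c<d. 0 \<le> ?z $ c" "n k + j0 < d" "0 < ?z $ (n k + j0)"
      using j0 nk w unfolding embed_block_vec_def s_def by auto
    show "cmod e \<le> 1"
      using nonneg_expanding_vector_not_stable[OF Y(1,2) z, of "cmod e"] Y(3)
        diag_block_eigenvector_expansion[OF Y(1,2) less_imp_le[OF nk(1)] nk(2) w(1)[unfolded s_def] Bw]
      by fastforce
  qed
qed

section \<open>Frobenius norm and diagonal blocks\<close>

lemma frob_norm_nonneg: "0 \<le> frob_norm M"
  unfolding frob_norm_def by (simp add: sum_nonneg)

lemma frob_norm_sq: "(frob_norm M)\<^sup>2 = (\<Sum>i<dim_row M. \<Sum>j<dim_col M. (M $$ (i,j))\<^sup>2)"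
  unfolding frob_norm_def by (simp add: sum_nonneg)

lemma frob_norm_sq_diag_block:
  assumes "n k \<le> n (Suc k)"
  shows "(frob_norm (block n M k k))\<^sup>2 = (\<Sum>i=n k..<n (Suc k). \<Sum>j=n k..<n (Suc k). (M $$ (i,j))\<^sup>2)"
  by (simp add: frob_norm_sq block_def sum.atLeastLessThan_shift_0 atLeast0LessThan comp_def)

lemma frob_norm_sq_by_row_blocks:
  assumes "M \<in> carrier_mat d d" "block_partition n m d"
  shows "(frob_norm M)\<^sup>2 = (\<Sum>k<m. \<Sum>i=n k..<n (Suc k). \<Sum>j<d. (M $$ (i,j))\<^sup>2)"
proof -
  have "n 0 = 0" "\<forall>k<m. n k \<le> n (Suc k)" "n m = d"
    using assms(2) unfolding block_partition_def by auto
  from sum_lessThan_blocks[OF this(1,2)] this(3) assms(1) show ?thesis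
    by (simp add: frob_norm_sq)
qed

lemma sum_frob_norm_sq_diag_blocks_le:
  assumes M: "M \<in> carrier_mat d d" and part: "block_partition n m d"
  shows "(\<Sum>k<m. (frob_norm (block n M k k))\<^sup>2) \<le> (frob_norm M)\<^sup>2"
  unfolding frob_norm_sq_by_row_blocks[OF M part]
proof (intro sum_mono)
  fix k assume "k \<in> {..<m}"
  then have nk: "n k < n (Suc k)" "n (Suc k) \<le> d" using block_partition_le[OF part] by auto
  then show "(frob_norm (block n M k k))\<^sup>2 \<le> (\<Sum>i=n k..<n (Suc k). \<Sum>j<d. (M $$ (i,j))\<^sup>2)"
    unfolding frob_norm_sq_diag_block[OF less_imp_le[OF nk(1)]]
    by (intro sum_mono sum_mono2) auto
qed

lemma frob_norm_sq_eq_sum_diag_blocks: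
  assumes M: "M \<in> carrier_mat d d" and part: "block_partition n m d"
    and off: "\<And>k i j. k < m \<Longrightarrow> n k \<le> i \<Longrightarrow> i < n (Suc k) \<Longrightarrow> j < d \<Longrightarrow>
      j < n k \<or> n (Suc k) \<le> j \<Longrightarrow> M $$ (i,j) = 0"
  shows "(frob_norm M)\<^sup>2 = (\<Sum>k<m. (frob_norm (block n M k k))\<^sup>2)"
  unfolding frob_norm_sq_by_row_blocks[OF M part]
proof (intro sum.cong refl)
  fix k assume "k \<in> {..<m}"
  then have k: "k < m" and nk: "n k < n (Suc k)" "n (Suc k) \<le> d"
    using block_partition_le[OF part] by auto
  have "(\<Sum>j<d. (M $$ (i,j))\<^sup>2) = (\<Sum>j=n k..<n (Suc k). (M $$ (i,j))\<^sup>2)"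
    if "n k \<le> i" "i < n (Suc k)" for i
    by (rule sum.mono_neutral_right) (use nk off[OF k that] in auto)
  then show "(\<Sum>i=n k..<n (Suc k). \<Sum>j<d. (M $$ (i,j))\<^sup>2) = (frob_norm (block n M k k))\<^sup>2"
    unfolding frob_norm_sq_diag_block[OF less_imp_le[OF nk(1)]] by (rule sum.cong[OF refl]) auto
qed

lemma frob_norm_le_of_diag_blocks:
  assumes X: "X \<in> carrier_mat d d" and Y: "Y \<in> carrier_mat d d" and B: "B \<in> carrier_mat d d"
    and part: "block_partition n m d"
    and off_diag: "\<And>k l. k < m \<Longrightarrow> l < m \<Longrightarrow> k \<noteq> l \<Longrightarrow> block n X k l = block n B k l"
    and diag: "\<And>k. k < m \<Longrightarrow>
      frob_norm (block n X k k - block n B k k) \<le> frob_norm (block n Y k k - block n B k k)"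
  shows "frob_norm (X - B) \<le> frob_norm (Y - B)"
proof -
  have blocks: "n (Suc k) \<le> d" if "k < m" for k
    using block_partition_le[OF part that] by auto
  have "(frob_norm (X - B))\<^sup>2 = (\<Sum>k<m. (frob_norm (block n (X - B) k k))\<^sup>2)"
  proof (rule frob_norm_sq_eq_sum_diag_blocks[OF minus_carrier_mat[OF B] part])
    fix k i j assume k: "k < m" "n k \<le> i" "i < n (Suc k)" and j: "j < d" "j < n k \<or> n (Suc k) \<le> j"
    obtain l where l: "l < m" "n l \<le> j" "j < n (Suc l)" using block_partition_cover[OF part j(1)] .
    have "k \<noteq> l" using j(2) l by auto
    then have "X $$ (i,j) = B $$ (i,j)"
      using block_eq_entry[OF off_diag[OF k(1) l(1)] k(2,3) l(2,3)] by simp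
    then show "(X - B) $$ (i,j) = 0" using X B k j blocks[OF k(1)] by simp
  qed
  also have "\<dots> = (\<Sum>k<m. (frob_norm (block n X k k - block n B k k))\<^sup>2)"
    using X B blocks by (simp add: block_minus)
  also have "\<dots> \<le> (\<Sum>k<m. (frob_norm (block n Y k k - block n B k k))\<^sup>2)"
    by (intro sum_mono power_mono diag frob_norm_nonneg) simp
  also have "\<dots> = (\<Sum>k<m. (frob_norm (block n (Y - B) k k))\<^sup>2)"
    using Y B blocks by (simp add: block_minus)
  also have "\<dots> \<le> (frob_norm (Y - B))\<^sup>2"
    by (rule sum_frob_norm_sq_diag_blocks_le[OF minus_carrier_mat[OF B] part])
  finally show ?thesis by (rule power2_le_imp_le) (rule frob_norm_nonneg)
qed

lemma nonneg_mat_of_blocks: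
  assumes X: "X \<in> carrier_mat d d" and part: "block_partition n m d"
    and B: "B \<in> carrier_mat d d" "nonneg_mat B"
    and diag: "\<And>k. k < m \<Longrightarrow> nonneg_mat (block n X k k)"
    and off_diag: "\<And>k l. k < m \<Longrightarrow> l < m \<Longrightarrow> k \<noteq> l \<Longrightarrow> block n X k l = block n B k l"
  shows "nonneg_mat X"
  unfolding nonneg_mat_def
proof (intro allI impI)
  fix i j assume "i < dim_row X" "j < dim_col X"
  then have ij: "i < d" "j < d" using X by auto
  obtain k where k: "k < m" "n k \<le> i" "i < n (Suc k)" using block_partition_cover[OF part ij(1)] .
  obtain l where l: "l < m" "n l \<le> j" "j < n (Suc l)" using block_partition_cover[OF part ij(2)] .
  show "0 \<le> X $$ (i,j)"
  proof (cases "k = l")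
    case True
    then have "X $$ (i,j) = block n X k k $$ (i - n k, j - n k)"
      using block_entry[OF k(2,3) l(2,3), of X] by simp
    then show ?thesis
      using nonneg_matD[OF diag[OF k(1)] block_carrier] k l True by simp
  next
    case False
    then show ?thesis
      using block_eq_entry[OF off_diag[OF k(1) l(1) False] k(2,3) l(2,3)] nonneg_matD[OF B(2,1) ij]
      by simp
  qed
qed

section \<open>Orthogonal similarity\<close>

definition mat_trace :: "'a::comm_ring_1 mat \<Rightarrow> 'a" where
  "mat_trace A = (\<Sum>i<dim_row A. A $$ (i,i))"

lemma mat_trace_mult_comm:
  assumes "A \<in> carrier_mat n k" "B \<in> carrier_mat k n"
  shows "mat_trace (A * B) = mat_trace (B * A)"
proof -
  have "mat_trace (A * B) = (\<Sum>i<n. \<Sum>j<k. A $$ (i,j) * B $$ (j,i))"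
    using assms by (simp add: mat_trace_def scalar_prod_def atLeast0LessThan)
  also have "\<dots> = (\<Sum>j<k. \<Sum>i<n. B $$ (j,i) * A $$ (i,j))"
    by (subst sum.swap) (simp add: mult.commute)
  also have "\<dots> = mat_trace (B * A)"
    using assms by (simp add: mat_trace_def scalar_prod_def atLeast0LessThan)
  finally show ?thesis .
qed

lemma frob_norm_eq_sqrt_trace: "frob_norm M = sqrt (mat_trace (M * M\<^sup>T))"
  unfolding frob_norm_def mat_trace_def
  by (simp add: scalar_prod_def atLeast0LessThan power2_eq_square)

lemma mult_mat_cancel_left:
  fixes A B C :: "'a::semiring_1 mat"
  assumes "A \<in> carrier_mat n n" "B \<in> carrier_mat n n" "A * B = 1\<^sub>m n" "C \<in> carrier_mat n nc"
  shows "A * (B * C) = C"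
proof -
  have "A * (B * C) = A * B * C" by (rule assoc_mult_mat[OF assms(1,2,4), symmetric])
  also have "\<dots> = C" unfolding assms(3) using assms(4) by (rule left_mult_one_mat)
  finally show ?thesis .
qed

lemma frob_norm_orthogonal_conj:
  assumes Q: "Q \<in> carrier_mat d d" "Q * Q\<^sup>T = 1\<^sub>m d" and M: "M \<in> carrier_mat d d"
  shows "frob_norm (Q\<^sup>T * M * Q) = frob_norm M"
proof -
  have cancel: "Q * (Q\<^sup>T * Z) = Z" if "Z \<in> carrier_mat d d" for Z
    by (rule mult_mat_cancel_left) (use Q that in auto)
  have "(Q\<^sup>T * M * Q) * (Q\<^sup>T * M * Q)\<^sup>T = Q\<^sup>T * (M * M\<^sup>T * Q)"
    using Q M by (simp add: transpose_mult[of "Q\<^sup>T" d d "M * Q" d] transpose_mult[of M d d Q d]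
        assoc_mult_mat[of "Q\<^sup>T" d d "M * Q" d _ d] assoc_mult_mat[of M d d Q d _ d] cancel)
  then have "mat_trace ((Q\<^sup>T * M * Q) * (Q\<^sup>T * M * Q)\<^sup>T) = mat_trace ((M * M\<^sup>T * Q) * Q\<^sup>T)"
    using Q M by (simp add: mat_trace_mult_comm[of _ d d])
  also have "\<dots> = mat_trace (M * M\<^sup>T)"
    using Q M by (simp add: assoc_mult_mat[of M d d "M\<^sup>T * Q" d "Q\<^sup>T" d]
        assoc_mult_mat[of "M\<^sup>T" d d Q d "Q\<^sup>T" d])
  finally show ?thesis unfolding frob_norm_eq_sqrt_trace by simp
qed

lemma spectral_radius_similar:
  assumes "similar_mat A B"
  shows "spectral_radius A = spectral_radius B"
proof -
  obtain n where "A \<in> carrier_mat n n" "B \<in> carrier_mat n n"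
    using similar_matD[OF assms] by auto
  then show ?thesis
    using char_poly_similar[OF assms]
    unfolding spectral_radius_def by (simp add: spectrum_root_char_poly)
qed

lemma rho_orthogonal_conj:
  assumes Q: "Q \<in> carrier_mat d d" "Q * Q\<^sup>T = 1\<^sub>m d" "Q\<^sup>T * Q = 1\<^sub>m d" and X: "X \<in> carrier_mat d d"
  shows "rho (Q\<^sup>T * X * Q) = rho X"
proof -
  let ?c = "map_mat complex_of_real"
  have "?c (Q\<^sup>T * X * Q) = ?c Q\<^sup>T * ?c X * ?c Q"
    using Q X by (simp add: of_real_hom.mat_hom_mult[of "Q\<^sup>T" d d "X * Q" d]
        of_real_hom.mat_hom_mult[of X d d Q d])
  moreover have "?c Q\<^sup>T * ?c Q = 1\<^sub>m d" "?c Q * ?c Q\<^sup>T = 1\<^sub>m d"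
    using Q of_real_hom.mat_hom_mult[of "Q\<^sup>T" d d Q d, symmetric]
      of_real_hom.mat_hom_mult[of Q d d "Q\<^sup>T" d, symmetric]
    by (simp_all add: of_real_hom.mat_hom_one)
  ultimately have "similar_mat (?c (Q\<^sup>T * X * Q)) (?c X)"
    using Q X unfolding similar_mat_def similar_mat_wit_def
    by (intro exI[of _ "?c Q\<^sup>T"] exI[of _ "?c Q"]) auto
  then show ?thesis unfolding rho_def by (rule spectral_radius_similar)
qed

lemma permutation_mat_transpose:
  assumes "permutation_mat d P"
  shows "permutation_mat d P\<^sup>T"
proof -
  have Pc: "P \<in> carrier_mat d d" and P01: "\<forall>i<d. \<forall>j<d. P $$ (i,j) = 0 \<or> P $$ (i,j) = 1"
    and row1: "\<forall>i<d. \<exists>!j. j < d \<and> P $$ (i,j) = 1" and col1: "\<forall>j<d. \<exists>!i. i < d \<and> P $$ (i,j) = 1"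
    using assms unfolding permutation_mat_def by auto
  have T: "P\<^sup>T $$ (i,j) = P $$ (j,i)" if "i < d" "j < d" for i j
    using Pc that by simp
  have "P\<^sup>T \<in> carrier_mat d d" using Pc by simp
  moreover have "\<forall>i<d. \<forall>j<d. P\<^sup>T $$ (i,j) = 0 \<or> P\<^sup>T $$ (i,j) = 1" using P01 T by simp
  moreover have "\<forall>i<d. \<exists>!j. j < d \<and> P\<^sup>T $$ (i,j) = 1"
  proof (intro allI impI)
    fix i assume i: "i < d"
    have "(\<lambda>j. j < d \<and> P\<^sup>T $$ (i,j) = 1) = (\<lambda>j. j < d \<and> P $$ (j,i) = 1)" using T i by auto
    then show "\<exists>!j. j < d \<and> P\<^sup>T $$ (i,j) = 1" using col1 i by simp
  qed
  moreover have "\<forall>j<d. \<exists>!i. i < d \<and> P\<^sup>T $$ (i,j) = 1"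
  proof (intro allI impI)
    fix j assume j: "j < d"
    have "(\<lambda>i. i < d \<and> P\<^sup>T $$ (i,j) = 1) = (\<lambda>i. i < d \<and> P $$ (j,i) = 1)" using T j by auto
    then show "\<exists>!i. i < d \<and> P\<^sup>T $$ (i,j) = 1" using row1 j by simp
  qed
  ultimately show ?thesis unfolding permutation_mat_def by (intro conjI)
qed

lemma permutation_mat_nonneg: "permutation_mat d P \<Longrightarrow> nonneg_mat P"
  unfolding permutation_mat_def nonneg_mat_def by (metis carrier_matD order.refl zero_le_one)

lemma permutation_mat_mult_transpose:
  assumes P: "permutation_mat d P"
  shows "P * P\<^sup>T = 1\<^sub>m d"
proof (rule eq_matI)
  have Pc: "P \<in> carrier_mat d d" and P01: "\<forall>i<d. \<forall>j<d. P $$ (i,j) = 0 \<or> P $$ (i,j) = 1"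
    and row1: "\<forall>i<d. \<exists>!j. j < d \<and> P $$ (i,j) = 1" and col1: "\<forall>j<d. \<exists>!i. i < d \<and> P $$ (i,j) = 1"
    using P unfolding permutation_mat_def by auto
  fix i j assume "i < dim_row (1\<^sub>m d)" "j < dim_col (1\<^sub>m d)"
  then have ij: "i < d" "j < d" by auto
  from row1 ij(1) have "\<exists>!k. k < d \<and> P $$ (i,k) = 1" by simp
  then obtain k where k: "k < d" "P $$ (i,k) = 1"
    and uniq: "\<forall>k'. k' < d \<and> P $$ (i,k') = 1 \<longrightarrow> k' = k"
    by (elim ex1E) blast
  have row: "P $$ (i,k') = (if k' = k then 1 else 0)" if "k' < d" for k'
    using P01 uniq k(2) that ij(1) by auto
  have "(P * P\<^sup>T) $$ (i,j) = (\<Sum>k'<d. P $$ (i,k') * P $$ (j,k'))"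
    using Pc ij by (simp add: scalar_prod_def atLeast0LessThan)
  also have "\<dots> = (\<Sum>k'<d. if k' = k then P $$ (j,k') else 0)"
    using row by (intro sum.cong) auto
  also have "\<dots> = P $$ (j,k)" using k(1) by simp
  also have "\<dots> = 1\<^sub>m d $$ (i,j)"
  proof (cases "j = i")
    case False
    from col1 k(1) have "\<exists>!i'. i' < d \<and> P $$ (i',k) = 1" by simp
    then have "P $$ (j,k) \<noteq> 1" using k(2) ij False by (elim ex1E) blast
    then show ?thesis using P01 k(1) ij False by auto
  qed (use k ij in simp)
  finally show "(P * P\<^sup>T) $$ (i,j) = 1\<^sub>m d $$ (i,j)" .
qed (use P in \<open>auto simp: permutation_mat_def\<close>)

lemma closest_stable_nonneg_orthogonal_conj:
  assumes Q: "Q \<in> carrier_mat d d" "nonneg_mat Q" "Q * Q\<^sup>T = 1\<^sub>m d" "Q\<^sup>T * Q = 1\<^sub>m d"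
    and B: "B \<in> carrier_mat d d" and closest: "closest_stable_nonneg X B"
  shows "closest_stable_nonneg (Q\<^sup>T * X * Q) (Q\<^sup>T * B * Q)"
proof -
  have X: "X \<in> carrier_mat d d" "nonneg_mat X" "stable X"
    and X_min: "\<And>Y. Y \<in> carrier_mat d d \<Longrightarrow> nonneg_mat Y \<Longrightarrow> stable Y \<Longrightarrow>
      frob_norm (X - B) \<le> frob_norm (Y - B)"
    using closest B unfolding closest_stable_nonneg_def by auto
  have QT: "Q\<^sup>T \<in> carrier_mat d d" "nonneg_mat Q\<^sup>T" "Q\<^sup>T * Q\<^sup>T\<^sup>T = 1\<^sub>m d" "Q\<^sup>T\<^sup>T * Q\<^sup>T = 1\<^sub>m d"
    using Q by (auto simp: nonneg_mat_def)
  have conj_minus: "Q\<^sup>T * Y * Q - Q\<^sup>T * B * Q = Q\<^sup>T * (Y - B) * Q" if "Y \<in> carrier_mat d d" for Y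
    using Q B that by (simp add: mult_minus_distrib_mat[of _ d d] minus_mult_distrib_mat[of _ d d])
  have "frob_norm (Q\<^sup>T * X * Q - Q\<^sup>T * B * Q) \<le> frob_norm (Y - Q\<^sup>T * B * Q)"
    if Y: "Y \<in> carrier_mat d d" "nonneg_mat Y" "stable Y" for Y
  proof -
    define Y' where "Y' = Q * Y * Q\<^sup>T"
    have Y': "Y' \<in> carrier_mat d d" "nonneg_mat Y'" "stable Y'"
      using Y Q QT rho_orthogonal_conj[OF QT(1,3,4) Y(1)]
      unfolding Y'_def stable_def by (auto intro!: nonneg_mat_mult)
    have Y_eq: "Y = Q\<^sup>T * Y' * Q"
      using Q Y unfolding Y'_def
      by (simp add: mult_mat_cancel_left[OF QT(1) Q(1) Q(4), where nc=d]
          mult_mat_cancel_left[OF QT(1) Q(1) Q(4) Y(1)])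
    have "frob_norm (Q\<^sup>T * X * Q - Q\<^sup>T * B * Q) = frob_norm (X - B)"
      unfolding conj_minus[OF X(1)] by (rule frob_norm_orthogonal_conj) (use Q X B in auto)
    also have "\<dots> \<le> frob_norm (Y' - B)" using X_min[OF Y'] .
    also have "\<dots> = frob_norm (Y - Q\<^sup>T * B * Q)"
      unfolding Y_eq conj_minus[OF Y'(1)] by (rule frob_norm_orthogonal_conj[symmetric]) (use Q Y' B in auto)
    finally show ?thesis .
  qed
  then show ?thesis
    using Q QT(2) X B rho_orthogonal_conj[OF Q(1,3,4) X(1)]
    unfolding closest_stable_nonneg_def stable_def
    by (auto intro!: nonneg_mat_mult)
qed

lemma closest_stable_nonneg_block_triangular:
  assumes B: "B \<in> carrier_mat d d" "nonneg_mat B" and part: "block_partition n m d" and m: "0 < m"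
    and B_lower: "\<forall>k<m. \<forall>l<k. block n B k l = 0\<^sub>m (n (Suc k) - n k) (n (Suc l) - n l)"
    and Xb: "\<forall>k<m. closest_stable_nonneg (Xb k) (block n B k k)"
    and X: "X \<in> carrier_mat d d"
    and X_diag: "\<forall>k<m. block n X k k = Xb k"
    and X_upper: "\<forall>k<m. \<forall>l<m. k < l \<longrightarrow> block n X k l = block n B k l"
    and X_lower: "\<forall>k<m. \<forall>l<k. block n X k l = 0\<^sub>m (n (Suc k) - n k) (n (Suc l) - n l)"
  shows "closest_stable_nonneg X B"
proof -
  have off_diag: "block n X k l = block n B k l" if "k < m" "l < m" "k \<noteq> l" for k l
    using that X_upper X_lower B_lower by (cases "k < l") auto
  have Xb_nonneg: "nonneg_mat (Xb k)" and Xb_stable: "stable (Xb k)"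
    and Xb_min: "\<And>Y. Y \<in> carrier_mat (n (Suc k) - n k) (n (Suc k) - n k) \<Longrightarrow> nonneg_mat Y \<Longrightarrow>
      stable Y \<Longrightarrow> frob_norm (Xb k - block n B k k) \<le> frob_norm (Y - block n B k k)"
    if "k < m" for k
    using Xb that unfolding closest_stable_nonneg_def by (auto simp: block_def)
  have "nonneg_mat X"
    by (rule nonneg_mat_of_blocks[OF X part B _ off_diag]) (use X_diag Xb_nonneg in simp)
  moreover have "stable X"
    using stable_block_upper_triangular[OF X part m X_lower] X_diag Xb_stable by simp
  moreover have "frob_norm (X - B) \<le> frob_norm (Y - B)"
    if Y: "Y \<in> carrier_mat d d" "nonneg_mat Y" "stable Y" for Y
  proof (rule frob_norm_le_of_diag_blocks[OF X Y(1) B(1) part off_diag])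
    fix k assume k: "k < m"
    have "nonneg_mat (block n Y k k)"
      using Y block_partition_le[OF part k] by (auto simp: nonneg_mat_def block_def)
    then show "frob_norm (block n X k k - block n B k k) \<le> frob_norm (block n Y k k - block n B k k)"
      using Xb_min[OF k block_carrier] stable_diag_block_of_nonneg[OF Y block_partition_le[OF part k]]
        X_diag k by simp
  qed
  ultimately show ?thesis
    unfolding closest_stable_nonneg_def using X B by auto
qed

theorem lemma2:
  fixes A P At Xt :: "real mat" and d m :: nat and n :: "nat \<Rightarrow> nat"
    and Xb :: "nat \<Rightarrow> real mat"
  assumes A: "A \<in> carrier_mat d d" and A_nonneg: "nonneg_mat A"
    and P: "permutation_mat d P"
    and At_def: "At = P * A * transpose_mat P"
    and m_pos: "0 < m"
    and n0: "n 0 = 0" and nm: "n m = d" and n_mono: "\<forall>k<m. n k < n (Suc k)"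
    and At_lower: "\<forall>k<m. \<forall>l<k. block n At k l = 0\<^sub>m (n (Suc k) - n k) (n (Suc l) - n l)"
    and Xb: "\<forall>k<m. closest_stable_nonneg (Xb k) (block n At k k)"
    and Xt: "Xt \<in> carrier_mat d d"
    and Xt_diag: "\<forall>k<m. block n Xt k k = Xb k"
    and Xt_upper: "\<forall>k<m. \<forall>l<m. k < l \<longrightarrow> block n Xt k l = block n At k l"
    and Xt_lower: "\<forall>k<m. \<forall>l<k. block n Xt k l = 0\<^sub>m (n (Suc k) - n k) (n (Suc l) - n l)"
  shows "closest_stable_nonneg (transpose_mat P * Xt * P) A"
proof -
  have Pc: "P \<in> carrier_mat d d" using P unfolding permutation_mat_def by simp
  have P_nonneg: "nonneg_mat P" using permutation_mat_nonneg[OF P] .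
  have P_orth: "P * P\<^sup>T = 1\<^sub>m d" "P\<^sup>T * P = 1\<^sub>m d"
    using permutation_mat_mult_transpose[OF P]
      permutation_mat_mult_transpose[OF permutation_mat_transpose[OF P]] by simp_all
  have At: "At \<in> carrier_mat d d" "nonneg_mat At"
    unfolding At_def using Pc A
    by (auto intro!: nonneg_mat_mult P_nonneg A_nonneg permutation_mat_nonneg[OF permutation_mat_transpose[OF P]])
  have "block_partition n m d" unfolding block_partition_def using n0 nm n_mono by simp
  from closest_stable_nonneg_block_triangular[OF At this m_pos At_lower Xb Xt Xt_diag Xt_upper Xt_lower]
  have "closest_stable_nonneg (P\<^sup>T * Xt * P) (P\<^sup>T * At * P)"
    by (rule closest_stable_nonneg_orthogonal_conj[OF Pc P_nonneg P_orth At(1)])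
  moreover have "P\<^sup>T * At * P = A"
    using Pc A P_orth unfolding At_def
    by (simp add: mult_mat_cancel_left[where n=d and nc=d] mult_mat_cancel_left[OF _ _ _ A])
  ultimately show ?thesis by simp
qed

end
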